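(* There is a polynomial-time computable retraction from $\mathcal B$ onto the set $\Sigma^{**}$ of length-monotone string functions, i.e. a polynomial-time computable total functional $R\colon\mathcal B\to\mathcal B$ with $R(\mathcal B)\subseteq\Sigma^{**}$ and $R(\varphi)=\varphi$ for all $\varphi\in\Sigma^{**}$.
   Context: $\Sigma=\{0,1\}$, $\mathcal B=(\Sigma^* )^{\Sigma^*}$ is the set of total string functions. $\varphi\in\mathcal B$ is length-monotone if $|\mathbf a|\le|\mathbf b|$ implies $|\varphi(\mathbf a)|\le|\varphi(\mathbf b)|$ for all strings; $\Sigma^{**}$ denotes the set of length-monotone string functions. An oracle Turing machine $M^?$ with oracle $\varphi$ replaces, upon entering its query state, the query-tape content $\mathbf b$ by $\varphi(\mathbf b)$ in one time step; $\operatorname{time}_{M^\varphi}(\mathbf a)$ is its number of steps on input $\mathbf a$. The size function is $|\varphi|(n)=\max\{|\varphi(\mathbf a)|:|\mathbf a|\le n\}$. Second-order polynomials are the smallest class of functions $\mathbb N^{\mathbb N}\times\mathbb N\to\mathbb N$ containing all $(l,n)\mapsto p(n)$ for polynomials $p$ with natural coefficients and closed under pointwise sum, pointwise product, and $P\mapsto P^+$, $P^+(l,n)=l(P(l,n))$. A total functional $F\colon\mathcal B\to\mathcal B$ is polynomial-time computable if some oracle machine $M^?$ with $M^\varphi=F(\varphi)$ for all $\varphi$ satisfies $\operatorname{time}_{M^\varphi}(\mathbf a)\le P(|\varphi|,|\mathbf a|)$ for all $\varphi,\mathbf a$, for some second-order polynomial $P$. *)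

theory Defs
  imports Main
begin

text \<open>Strings over Sigma = {0,1} are bool lists (False = 0, True = 1).
  The space B of total string functions is bool list => bool list.\<close>

type_synonym str = "bool list"
type_synonym strfun = "str \<Rightarrow> str"

definition length_monotone :: "strfun \<Rightarrow> bool" where
  "length_monotone \<phi> \<longleftrightarrow>
     (\<forall>a b. length a \<le> length b \<longrightarrow> length (\<phi> a) \<le> length (\<phi> b))"

definition sizefun :: "strfun \<Rightarrow> nat \<Rightarrow> nat" where
  "sizefun \<phi> n = Max ((\<lambda>a. length (\<phi> a)) ` {a :: str. length a \<le> n})"

inductive second_order_poly :: "((nat \<Rightarrow> nat) \<Rightarrow> nat \<Rightarrow> nat) \<Rightarrow> bool" where
  sop_const: "second_order_poly (\<lambda>l n. c)"
| sop_var:   "second_order_poly (\<lambda>l n. n)"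
| sop_add:   "second_order_poly P \<Longrightarrow> second_order_poly Q \<Longrightarrow> second_order_poly (\<lambda>l n. P l n + Q l n)"
| sop_mult:  "second_order_poly P \<Longrightarrow> second_order_poly Q \<Longrightarrow> second_order_poly (\<lambda>l n. P l n * Q l n)"
| sop_app:   "second_order_poly P \<Longrightarrow> second_order_poly (\<lambda>l n. l (P l n))"

text \<open>A machine has ntapes >= 3 two-way infinite tapes
  (tape 0: input tape, tape 1: query tape, tape 2: output tape, the others work tapes),
  finitely many states 0..<nstates and tape symbols 0..<nsyms, where symbol 0 is the
  blank, symbol 1 encodes the bit 0 (False) and symbol 2 encodes the bit 1 (True).
  The transition function maps a non-halting, non-query state and the tuple of scanned
  symbols to a new state, the symbols to be written and head moves in {-1,0,1}.\<close>
record otm =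
  ntapes  :: nat
  nstates :: nat
  nsyms   :: nat
  delta   :: "nat \<Rightarrow> nat list \<Rightarrow> nat \<times> nat list \<times> int list"
  qstart  :: nat
  qhalt   :: nat
  qquery  :: nat
  qanswer :: nat

definition wf_otm :: "otm \<Rightarrow> bool" where
  "wf_otm M \<longleftrightarrow>
     ntapes M \<ge> 3 \<and> nsyms M \<ge> 3 \<and>
     qstart M < nstates M \<and> qhalt M < nstates M \<and> qquery M < nstates M \<and>
     qanswer M < nstates M \<and> qhalt M \<noteq> qquery M \<and>
     (\<forall>q syms. q < nstates M \<longrightarrow> length syms = ntapes M \<longrightarrow> (\<forall>s\<in>set syms. s < nsyms M) \<longrightarrow>
        (case delta M q syms of (q', w, m) \<Rightarrow>
           q' < nstates M \<and> length w = ntapes M \<and> (\<forall>s\<in>set w. s < nsyms M) \<and>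
           length m = ntapes M \<and> (\<forall>d\<in>set m. d \<in> {-1, 0, 1})))"

type_synonym tape = "int \<Rightarrow> nat"
text \<open>configuration: state, tape contents, head positions\<close>
type_synonym config = "nat \<times> tape list \<times> int list"

definition str_tape :: "str \<Rightarrow> tape" where
  "str_tape s = (\<lambda>i. if 0 \<le> i \<and> i < int (length s) then (if s ! nat i then 2 else 1) else 0)"

definition read_str :: "tape \<Rightarrow> str" where
  "read_str t = (let n = (LEAST n. t (int n) \<notin> {1, 2}) in map (\<lambda>i. t (int i) = 2) [0..<n])"

definition init_config :: "otm \<Rightarrow> str \<Rightarrow> config" where
  "init_config M a = (qstart M, str_tape a # replicate (ntapes M - 1) (\<lambda>_. 0),
                      replicate (ntapes M) 0)"

definition step :: "otm \<Rightarrow> strfun \<Rightarrow> config \<Rightarrow> config" where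
  "step M \<phi> c = (case c of (q, ts, hs) \<Rightarrow>
     if q = qhalt M then c
     else if q = qquery M then
       (qanswer M, ts[1 := str_tape (\<phi> (read_str (ts ! 1)))], hs[1 := 0])
     else
       (let syms = map (\<lambda>i. (ts ! i) (hs ! i)) [0..<ntapes M] in
        case delta M q syms of (q', w, m) \<Rightarrow>
          (q', map (\<lambda>i. (ts ! i)((hs ! i) := w ! i)) [0..<ntapes M],
               map (\<lambda>i. hs ! i + m ! i) [0..<ntapes M])))"

definition run :: "otm \<Rightarrow> strfun \<Rightarrow> str \<Rightarrow> nat \<Rightarrow> config" where
  "run M \<phi> a t = (step M \<phi> ^^ t) (init_config M a)"

definition halts_with :: "otm \<Rightarrow> strfun \<Rightarrow> str \<Rightarrow> nat \<Rightarrow> str \<Rightarrow> bool" where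
  "halts_with M \<phi> a t y \<longleftrightarrow>
     (case run M \<phi> a t of (q, ts, hs) \<Rightarrow> q = qhalt M \<and> read_str (ts ! 2) = y)"

definition poly_time_functional :: "(strfun \<Rightarrow> strfun) \<Rightarrow> bool" where
  "poly_time_functional F \<longleftrightarrow>
     (\<exists>M P. wf_otm M \<and> second_order_poly P \<and>
        (\<forall>\<phi> a. \<exists>t \<le> P (sizefun \<phi>) (length a). halts_with M \<phi> a t (F \<phi> a)))"

end

theory Submission
  imports Defs
begin

text \<open>Let \<open>\<mu>\<^sub>\<phi>(k)\<close> be the largest length of \<open>\<phi>(0\<^sup>j)\<close> for \<open>j < k\<close>, and let \<open>R(\<phi>)(a)\<close> be
  \<open>\<phi>(a)\<close> truncated or padded with zeros to length \<open>\<mu>\<^sub>\<phi>(|a| + 1)\<close>.  This length grows with \<open>|a|\<close>,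
  so \<open>R(\<phi>)\<close> is length-monotone; if \<open>\<phi>\<close> is length-monotone, the maximum is attained at the
  zero string of length \<open>|a|\<close>, whose image has the same length as \<open>\<phi>(a)\<close>, so \<open>R(\<phi>) = \<phi>\<close>.
  An oracle machine computes \<open>R(\<phi>)(a)\<close> by querying the zero strings of lengths \<open>0, \<dots>, |a|\<close>
  while keeping the running maximum in unary, then querying \<open>a\<close> and copying that many cells of
  the answer.  Each of the \<open>|a| + 1\<close> rounds takes \<open>O(|a| + |\<phi>|(|a|))\<close> steps.\<close>

section \<open>The retraction\<close>

fun max_len_zeros :: "strfun \<Rightarrow> nat \<Rightarrow> nat" where
  "max_len_zeros \<phi> 0 = 0"
| "max_len_zeros \<phi> (Suc k) = max (max_len_zeros \<phi> k) (length (\<phi> (replicate k False)))"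

definition resize :: "nat \<Rightarrow> str \<Rightarrow> str" where
  "resize m b = map (\<lambda>i. i < length b \<and> b ! i) [0..<m]"

definition retract :: "strfun \<Rightarrow> strfun" where
  "retract \<phi> a = resize (max_len_zeros \<phi> (Suc (length a))) (\<phi> a)"

lemma length_resize [simp]: "length (resize m b) = m"
  by (simp add: resize_def)

lemma resize_length [simp]: "resize (length b) b = b"
  by (rule nth_equalityI) (simp_all add: resize_def)

lemma max_len_zeros_mono: "k \<le> k' \<Longrightarrow> max_len_zeros \<phi> k \<le> max_len_zeros \<phi> k'"
  by (induction k') (auto simp: le_Suc_eq)

lemma length_monotone_retract: "length_monotone (retract \<phi>)"
  unfolding length_monotone_def retract_def
  by (simp del: max_len_zeros.simps add: max_len_zeros_mono)

lemma max_len_zeros_eq_if_length_monotone: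
  assumes "length_monotone \<phi>"
  shows "max_len_zeros \<phi> (Suc n) = length (\<phi> (replicate n False))"
proof (induction n)
  case (Suc n)
  have "length (\<phi> (replicate n False)) \<le> length (\<phi> (replicate (Suc n) False))"
    using assms unfolding length_monotone_def by simp
  with Suc show ?case by simp
qed simp

lemma retract_eq_if_length_monotone:
  assumes "length_monotone \<phi>"
  shows "retract \<phi> = \<phi>"
proof
  fix a
  have "length (\<phi> (replicate (length a) False)) = length (\<phi> a)"
    using assms unfolding length_monotone_def by (metis le_antisym length_replicate order_refl)
  then show "retract \<phi> a = \<phi> a"
    using max_len_zeros_eq_if_length_monotone[OF assms, of "length a"] by (simp add: retract_def)
qed

section \<open>An oracle machine computing the retraction\<close>

text \<open>Tape 0 holds the input, tape 1 is the query tape, tape 2 the output tape, tape 3 the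
  running maximum in unary and tape 4 the round counter \<open>k\<close> in unary.  State 0 writes the zero
  string of length \<open>k\<close> on the query tape and 1 queries.  State 2 receives the answer: it goes
  to 3, which extends the maximum to the length of the answer, after which 4 and 5 rewind tapes 1
  and 3; but if cell \<open>-1\<close> of the output tape is marked, the answer is that of the final query and
  it goes to 10, which writes the output, and then halts in 11.  State 6 either increments the
  counter (7 rewinds it) or, once the input is exhausted, moves to 8, which rewinds the input;
  9 copies the input to the query tape and sets the mark.\<close>

definition stay :: "nat \<Rightarrow> int" where
  "stay = (\<lambda>_. 0)"

definition retract_transition :: "nat \<Rightarrow> (nat \<Rightarrow> nat) \<Rightarrow> nat \<times> (nat \<Rightarrow> nat) \<times> (nat \<Rightarrow> int)" where
  "retract_transition q S =
    (if q = 0 then (if S 4 \<noteq> 0 then (0, S(1 := 1), stay(1 := 1, 4 := 1)) else (1, S(1 := 0), stay))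
     else if q = 2 then (if S 2 \<noteq> 0 then (10, S, stay(2 := 1)) else (3, S, stay))
     else if q = 3 then (if S 1 \<noteq> 0 then (3, S(3 := 1), stay(1 := 1, 3 := 1))
                         else (4, S, stay(1 := -1, 3 := -1)))
     else if q = 4 then (if S 1 \<noteq> 0 then (4, S, stay(1 := -1)) else (5, S, stay(1 := 1)))
     else if q = 5 then (if S 3 \<noteq> 0 then (5, S, stay(3 := -1)) else (6, S, stay(3 := 1)))
     else if q = 6 then (if S 0 \<noteq> 0 then (7, S(4 := 1), stay(0 := 1, 4 := -1))
                         else (8, S, stay(0 := -1, 2 := -1)))
     else if q = 7 then (if S 4 \<noteq> 0 then (7, S, stay(4 := -1)) else (0, S, stay(4 := 1)))
     else if q = 8 then (if S 0 \<noteq> 0 then (8, S, stay(0 := -1)) else (9, S, stay(0 := 1)))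
     else if q = 9 then (if S 0 \<noteq> 0 then (9, S(1 := S 0), stay(0 := 1, 1 := 1))
                         else (1, S(1 := 0, 2 := 1), stay))
     else if q = 10 then (if S 3 \<noteq> 0 then (10, S(2 := (if S 1 = 2 then 2 else 1)), stay(1 := 1, 2 := 1, 3 := 1))
                          else (11, S, stay))
     else (q, S, stay))"

definition retract_machine :: otm where
  "retract_machine =
     \<lparr>ntapes = 5, nstates = 12, nsyms = 3,
      delta = (\<lambda>q syms. case retract_transition q (\<lambda>i. if i < 5 then syms ! i else 0) of
                 (q', W, D) \<Rightarrow> (q', map W [0..<5], map D [0..<5])),
      qstart = 0, qhalt = 11, qquery = 1, qanswer = 2\<rparr>"

lemma upt_5: "[0..<5] = [0, 1, 2, 3, 4 :: nat]"
  by (simp add: upt_rec)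

lemma less_5_iff: "i < (5::nat) \<longleftrightarrow> i = 0 \<or> i = 1 \<or> i = 2 \<or> i = 3 \<or> i = 4"
  by auto

lemma wf_retract_machine: "wf_otm retract_machine"
proof -
  have "case delta retract_machine q syms of (q', w, m) \<Rightarrow>
          q' < 12 \<and> length w = 5 \<and> (\<forall>s\<in>set w. s < 3) \<and> length m = 5 \<and> (\<forall>d\<in>set m. d \<in> {-1, 0, 1})"
    if "q < 12" "length syms = 5" "\<forall>s\<in>set syms. s < 3" for q syms
  proof -
    have "syms ! i < 3" if "i < 5" for i
      using \<open>length syms = 5\<close> \<open>\<forall>s\<in>set syms. s < 3\<close> that by (simp add: nth_mem)
    then have "syms ! 0 < 3" "syms ! 1 < 3" "syms ! 2 < 3" "syms ! 3 < 3" "syms ! 4 < 3"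
      by simp_all
    with \<open>q < 12\<close> show ?thesis
      unfolding retract_machine_def retract_transition_def by (simp add: upt_5 stay_def)
  qed
  then show ?thesis
    unfolding wf_otm_def by (simp add: retract_machine_def)
qed

definition cfg :: "nat \<Rightarrow> (nat \<Rightarrow> tape) \<Rightarrow> (nat \<Rightarrow> int) \<Rightarrow> config" where
  "cfg q T H = (q, map T [0..<5], map H [0..<5])"

lemma cfg_cong:
  "(\<And>i. i < 5 \<Longrightarrow> T i = T' i) \<Longrightarrow> (\<And>i. i < 5 \<Longrightarrow> H i = H' i) \<Longrightarrow> cfg q T H = cfg q T' H'"
  unfolding cfg_def upt_5 by simp

definition advance :: "nat set \<Rightarrow> (nat \<Rightarrow> int) \<Rightarrow> nat \<Rightarrow> int" where
  "advance I H i = (if i \<in> I then H i + 1 else H i)"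

lemma step_cfg:
  assumes "q \<noteq> 1" "q \<noteq> 11"
  shows "step retract_machine \<phi> (cfg q T H) =
    (case retract_transition q (\<lambda>i. if i < 5 then T i (H i) else 0) of
       (q', W, D) \<Rightarrow> cfg q' (\<lambda>i. (T i)(H i := W i)) (\<lambda>i. H i + D i))"
proof -
  have "(\<lambda>i. if i < 5 then map (\<lambda>i. (map T [0..<5] ! i) (map H [0..<5] ! i)) [0..<5] ! i else 0)
      = (\<lambda>i. if i < 5 then T i (H i) else 0)"
    by auto
  with assms show ?thesis
    unfolding step_def retract_machine_def cfg_def by (simp split: prod.splits)
qed

lemma step_query:
  "step retract_machine \<phi> (cfg 1 T H) = cfg 2 (T(1 := str_tape (\<phi> (read_str (T 1))))) (H(1 := 0))"
  unfolding step_def retract_machine_def cfg_def by (simp add: upt_5)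

lemma retract_machine_step:
  shows step_write_zeros:
    "T 4 (H 4) \<noteq> 0 \<Longrightarrow>
      step retract_machine \<phi> (cfg 0 T H) = cfg 0 (T(1 := (T 1)(H 1 := 1))) (advance {1, 4} H)"
  and step_write_zeros_end:
    "T 4 (H 4) = 0 \<Longrightarrow>
      step retract_machine \<phi> (cfg 0 T H) = cfg 1 (T(1 := (T 1)(H 1 := 0))) H"
  and step_dispatch_measure:
    "T 2 (H 2) = 0 \<Longrightarrow>
      step retract_machine \<phi> (cfg 2 T H) = cfg 3 T H"
  and step_dispatch_output:
    "T 2 (H 2) \<noteq> 0 \<Longrightarrow>
      step retract_machine \<phi> (cfg 2 T H) = cfg 10 T (H(2 := H 2 + 1))"
  and step_measure:
    "T 1 (H 1) \<noteq> 0 \<Longrightarrow>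
      step retract_machine \<phi> (cfg 3 T H) = cfg 3 (T(3 := (T 3)(H 3 := 1))) (advance {1, 3} H)"
  and step_measure_end:
    "T 1 (H 1) = 0 \<Longrightarrow>
      step retract_machine \<phi> (cfg 3 T H) = cfg 4 T (H(1 := H 1 - 1, 3 := H 3 - 1))"
  and step_rewind_query:
    "T 1 (H 1) \<noteq> 0 \<Longrightarrow>
      step retract_machine \<phi> (cfg 4 T H) = cfg 4 T (H(1 := H 1 - 1))"
  and step_rewind_query_end:
    "T 1 (H 1) = 0 \<Longrightarrow>
      step retract_machine \<phi> (cfg 4 T H) = cfg 5 T (H(1 := H 1 + 1))"
  and step_rewind_max:
    "T 3 (H 3) \<noteq> 0 \<Longrightarrow>
      step retract_machine \<phi> (cfg 5 T H) = cfg 5 T (H(3 := H 3 - 1))"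
  and step_rewind_max_end:
    "T 3 (H 3) = 0 \<Longrightarrow>
      step retract_machine \<phi> (cfg 5 T H) = cfg 6 T (H(3 := H 3 + 1))"
  and step_next_prefix:
    "T 0 (H 0) \<noteq> 0 \<Longrightarrow>
      step retract_machine \<phi> (cfg 6 T H) =
        cfg 7 (T(4 := (T 4)(H 4 := 1))) (H(0 := H 0 + 1, 4 := H 4 - 1))"
  and step_input_exhausted:
    "T 0 (H 0) = 0 \<Longrightarrow>
      step retract_machine \<phi> (cfg 6 T H) = cfg 8 T (H(0 := H 0 - 1, 2 := H 2 - 1))"
  and step_rewind_counter:
    "T 4 (H 4) \<noteq> 0 \<Longrightarrow>
      step retract_machine \<phi> (cfg 7 T H) = cfg 7 T (H(4 := H 4 - 1))"
  and step_rewind_counter_end: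
    "T 4 (H 4) = 0 \<Longrightarrow>
      step retract_machine \<phi> (cfg 7 T H) = cfg 0 T (H(4 := H 4 + 1))"
  and step_rewind_input:
    "T 0 (H 0) \<noteq> 0 \<Longrightarrow>
      step retract_machine \<phi> (cfg 8 T H) = cfg 8 T (H(0 := H 0 - 1))"
  and step_rewind_input_end:
    "T 0 (H 0) = 0 \<Longrightarrow>
      step retract_machine \<phi> (cfg 8 T H) = cfg 9 T (H(0 := H 0 + 1))"
  and step_copy_input:
    "T 0 (H 0) \<noteq> 0 \<Longrightarrow>
      step retract_machine \<phi> (cfg 9 T H) =
        cfg 9 (T(1 := (T 1)(H 1 := T 0 (H 0)))) (advance {0, 1} H)"
  and step_copy_input_end:
    "T 0 (H 0) = 0 \<Longrightarrow>
      step retract_machine \<phi> (cfg 9 T H) =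
        cfg 1 (T(1 := (T 1)(H 1 := 0), 2 := (T 2)(H 2 := 1))) H"
  and step_write_output:
    "T 3 (H 3) \<noteq> 0 \<Longrightarrow>
      step retract_machine \<phi> (cfg 10 T H) =
        cfg 10 (T(2 := (T 2)(H 2 := (if T 1 (H 1) = 2 then 2 else 1)))) (advance {1, 2, 3} H)"
  and step_write_output_end:
    "T 3 (H 3) = 0 \<Longrightarrow>
      step retract_machine \<phi> (cfg 10 T H) = cfg 11 T H"
  by (auto simp: step_cfg retract_transition_def stay_def advance_def less_5_iff intro!: cfg_cong)

section \<open>Runs of the machine\<close>

definition steps :: "strfun \<Rightarrow> nat \<Rightarrow> config \<Rightarrow> config" where
  "steps \<phi> n = step retract_machine \<phi> ^^ n"

lemma steps_add: "steps \<phi> (m + n) c = steps \<phi> n (steps \<phi> m c)"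
  unfolding steps_def by (metis funpow_add add.commute comp_apply)

lemma steps_Suc: "steps \<phi> (Suc n) c = steps \<phi> n (step retract_machine \<phi> c)"
  unfolding steps_def by (simp only: funpow_Suc_right comp_apply)

lemma steps_1: "steps \<phi> 1 c = step retract_machine \<phi> c"
  unfolding steps_def by simp

lemma sweep:
  assumes body: "\<And>T H. T c (H c) \<noteq> 0 \<Longrightarrow>
      step retract_machine \<phi> (cfg q T H) = cfg q (T(w := (T w)(H w := g (T r (H r))))) (advance I H)"
    and tapes: "c \<in> I" "r \<in> I" "w \<in> I" "w \<noteq> c" "w \<noteq> r"
    and cells: "\<And>x. p \<le> x \<Longrightarrow> x < p + int n \<Longrightarrow> T c x \<noteq> 0"
    and heads: "\<And>i. i \<in> I \<Longrightarrow> H i = p"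
    and T': "\<And>i x. i < 5 \<Longrightarrow> T' i x = (if i = w \<and> p \<le> x \<and> x < p + int n then g (T r x) else T i x)"
    and H': "\<And>i. i < 5 \<Longrightarrow> H' i = (if i \<in> I then p + int n else H i)"
  shows "steps \<phi> n (cfg q T H) = cfg q T' H'"
proof -
  have "steps \<phi> n (cfg q T H) =
      cfg q (T(w := \<lambda>x. if p \<le> x \<and> x < p + int n then g (T r x) else T w x))
        (\<lambda>i. if i \<in> I then p + int n else H i)"
    using cells heads
  proof (induction n arbitrary: p T H)
    case 0
    then show ?case
      by (auto simp: steps_def intro!: cfg_cong)
  next
    case (Suc n)
    define T1 where "T1 = T(w := (T w)(p := g (T r p)))"
    have "step retract_machine \<phi> (cfg q T H) = cfg q T1 (advance I H)"
      using body[of T H] Suc.prems tapes by (simp add: T1_def)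
    moreover have "steps \<phi> n (cfg q T1 (advance I H)) =
        cfg q (T1(w := \<lambda>x. if p + 1 \<le> x \<and> x < p + 1 + int n then g (T1 r x) else T1 w x))
          (\<lambda>i. if i \<in> I then p + 1 + int n else advance I H i)"
      using Suc.prems tapes by (intro Suc.IH) (auto simp: T1_def advance_def)
    moreover have "T1(w := \<lambda>x. if p + 1 \<le> x \<and> x < p + 1 + int n then g (T1 r x) else T1 w x) =
        T(w := \<lambda>x. if p \<le> x \<and> x < p + int (Suc n) then g (T r x) else T w x)"
      using tapes by (auto simp: T1_def fun_eq_iff)
    moreover have "(\<lambda>i. if i \<in> I then p + 1 + int n else advance I H i) =
        (\<lambda>i. if i \<in> I then p + int (Suc n) else H i)"
      by (auto simp: advance_def)
    ultimately show ?case
      by (simp only: steps_Suc)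
  qed
  also have "\<dots> = cfg q T' H'"
    using T' H' by (intro cfg_cong) auto
  finally show ?thesis .
qed

lemma rewind:
  assumes move_left: "\<And>T H. T i (H i) \<noteq> 0 \<Longrightarrow>
      step retract_machine \<phi> (cfg q T H) = cfg q T (H(i := H i - 1))"
    and turn: "\<And>T H. T i (H i) = 0 \<Longrightarrow>
      step retract_machine \<phi> (cfg q T H) = cfg q' T (H(i := H i + 1))"
    and blank: "T i (-1) = 0"
    and cells: "\<And>x. 0 \<le> x \<Longrightarrow> x < int n \<Longrightarrow> T i x \<noteq> 0"
    and head: "H i = int n - 1"
  shows "steps \<phi> (n + 1) (cfg q T H) = cfg q' T (H(i := 0))"
  using cells head
proof (induction n arbitrary: H)
  case 0
  then have "step retract_machine \<phi> (cfg q T H) = cfg q' T (H(i := 0))"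
    using turn[of T H] blank by simp
  then show ?case
    by (simp only: steps_1 add_0)
next
  case (Suc n)
  then have "step retract_machine \<phi> (cfg q T H) = cfg q T (H(i := H i - 1))"
    using move_left[of T H] by simp
  moreover have "steps \<phi> (n + 1) (cfg q T (H(i := H i - 1))) = cfg q' T (H(i := 0))"
    using Suc.prems by (subst Suc.IH) auto
  ultimately show ?case
    by (simp only: steps_Suc add_Suc fun_upd_upd)
qed

definition unary :: "nat \<Rightarrow> tape" where
  "unary m = str_tape (replicate m False)"

lemma unary_apply: "unary m x = (if 0 \<le> x \<and> x < int m then 1 else 0)"
  unfolding unary_def str_tape_def by auto

text \<open>Tapes at the start of round \<open>k\<close> with running maximum \<open>m\<close>; \<open>Q\<close> is whatever the previous
  query left on tape 1.\<close>

definition loop_tapes :: "str \<Rightarrow> tape \<Rightarrow> nat \<Rightarrow> nat \<Rightarrow> nat \<Rightarrow> tape" where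
  "loop_tapes a Q m k = (\<lambda>_ _. 0)(0 := str_tape a, 1 := Q, 3 := unary m, 4 := unary k)"

definition loop_heads :: "nat \<Rightarrow> nat \<Rightarrow> int" where
  "loop_heads k = (\<lambda>_. 0)(0 := int k)"

lemma read_str_eqI:
  assumes "\<And>j. j < m \<Longrightarrow> t (int j) \<in> {1, 2}" and "t (int m) \<notin> {1, 2}"
  shows "read_str t = map (\<lambda>j. t (int j) = 2) [0..<m]"
proof -
  have "(LEAST n. t (int n) \<notin> {1, 2}) = m"
    using assms by (intro Least_equality) (auto simp: not_less[symmetric])
  then show ?thesis
    unfolding read_str_def by simp
qed

lemma steps_query_zeros:
  "steps \<phi> (k + 2) (cfg 0 (loop_tapes a Q m k) (loop_heads k)) =
    cfg 2 (loop_tapes a (str_tape (\<phi> (replicate k False))) m k) ((loop_heads k)(4 := int k))"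
proof -
  define T0 where "T0 = loop_tapes a Q m k"
  define H0 where "H0 = loop_heads k"
  define T1 where "T1 = T0(1 := \<lambda>x. if 0 \<le> x \<and> x < int k then 1 else Q x)"
  define H1 where "H1 = H0(1 := int k, 4 := int k)"
  have "steps \<phi> k (cfg 0 T0 H0) = cfg 0 T1 H1"
    by (rule sweep[where g = "\<lambda>_. 1" and r = 4, OF step_write_zeros])
      (auto simp: T0_def H0_def T1_def H1_def loop_tapes_def loop_heads_def unary_apply)
  moreover have "step retract_machine \<phi> (cfg 0 T1 H1) = cfg 1 (T1(1 := (T1 1)(int k := 0))) H1"
    by (subst step_write_zeros_end) (auto simp: T0_def H1_def T1_def loop_tapes_def unary_apply)
  moreover have "read_str ((T1 1)(int k := 0)) = replicate k False"
    by (subst read_str_eqI[of k]) (auto simp: T1_def intro: nth_equalityI)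
  then have "step retract_machine \<phi> (cfg 1 (T1(1 := (T1 1)(int k := 0))) H1) =
      cfg 2 (loop_tapes a (str_tape (\<phi> (replicate k False))) m k) (H0(4 := int k))"
    unfolding step_query
    by (auto simp: T1_def T0_def H1_def H0_def loop_tapes_def loop_heads_def intro!: cfg_cong)
  ultimately show ?thesis
    by (simp only: T0_def H0_def steps_add steps_1 one_add_one[symmetric])
qed

lemma steps_measure_answer:
  fixes b :: str
  defines "L \<equiv> length b"
  shows "steps \<phi> (3 * L + 4) (cfg 2 (loop_tapes a (str_tape b) m k) ((loop_heads k)(4 := int k))) =
    cfg 6 (loop_tapes a (str_tape b) (max m L) k) ((loop_heads k)(4 := int k))"
proof -
  define T0 where "T0 = loop_tapes a (str_tape b) m k"
  define H0 where "H0 = (loop_heads k)(4 := int k)"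
  define T1 where "T1 = loop_tapes a (str_tape b) (max m L) k"
  have dispatch: "step retract_machine \<phi> (cfg 2 T0 H0) = cfg 3 T0 H0"
    by (rule step_dispatch_measure) (simp add: T0_def loop_tapes_def)
  have measure: "steps \<phi> (L + 1) (cfg 3 T0 H0) = cfg 4 T1 (H0(1 := int L - 1, 3 := int L - 1))"
  proof -
    have "steps \<phi> L (cfg 3 T0 H0) = cfg 3 T1 (H0(1 := int L, 3 := int L))"
      by (rule sweep[where g = "\<lambda>_. 1" and r = 1, OF step_measure])
        (auto simp: T0_def T1_def H0_def L_def loop_tapes_def loop_heads_def unary_apply str_tape_def)
    moreover have "step retract_machine \<phi> (cfg 3 T1 (H0(1 := int L, 3 := int L))) =
        cfg 4 T1 (H0(1 := int L - 1, 3 := int L - 1))"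
      by (subst step_measure_end) (auto simp: T1_def L_def loop_tapes_def str_tape_def intro!: cfg_cong)
    ultimately show ?thesis
      by (simp only: steps_add steps_1)
  qed
  have rewind_query: "steps \<phi> (L + 1) (cfg 4 T1 (H0(1 := int L - 1, 3 := int L - 1))) =
      cfg 5 T1 (H0(3 := int L - 1))"
    by (subst rewind[OF step_rewind_query step_rewind_query_end])
      (auto simp: T1_def H0_def L_def loop_tapes_def loop_heads_def str_tape_def intro!: cfg_cong)
  have rewind_max: "steps \<phi> (L + 1) (cfg 5 T1 (H0(3 := int L - 1))) = cfg 6 T1 H0"
    by (subst rewind[OF step_rewind_max step_rewind_max_end])
      (auto simp: T1_def H0_def L_def loop_tapes_def loop_heads_def unary_apply intro!: cfg_cong)
  have "3 * L + 4 = 1 + (L + 1) + (L + 1) + (L + 1)"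
    by simp
  then have "steps \<phi> (3 * L + 4) (cfg 2 T0 H0) =
      steps \<phi> (L + 1) (steps \<phi> (L + 1) (steps \<phi> (L + 1) (steps \<phi> 1 (cfg 2 T0 H0))))"
    by (simp only: steps_add)
  also have "\<dots> = cfg 6 T1 H0"
    by (simp only: steps_1 dispatch measure rewind_query rewind_max)
  finally show ?thesis
    by (simp only: T0_def H0_def T1_def)
qed

definition zeros_round_time :: "strfun \<Rightarrow> nat \<Rightarrow> nat" where
  "zeros_round_time \<phi> k = (k + 2) + (3 * length (\<phi> (replicate k False)) + 4)"

lemma steps_zeros_round:
  "steps \<phi> (zeros_round_time \<phi> k) (cfg 0 (loop_tapes a Q m k) (loop_heads k)) =
    cfg 6 (loop_tapes a (str_tape (\<phi> (replicate k False))) (max m (length (\<phi> (replicate k False)))) k)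
      ((loop_heads k)(4 := int k))"
  by (simp only: zeros_round_time_def steps_add[of \<phi> "k + 2"] steps_query_zeros steps_measure_answer)

lemma steps_next_prefix:
  assumes "k < length a"
  shows "steps \<phi> (k + 2) (cfg 6 (loop_tapes a Q m k) ((loop_heads k)(4 := int k))) =
    cfg 0 (loop_tapes a Q m (k + 1)) (loop_heads (k + 1))"
proof -
  define T0 where "T0 = loop_tapes a Q m k"
  define H0 where "H0 = (loop_heads k)(4 := int k)"
  define T1 where "T1 = loop_tapes a Q m (k + 1)"
  define H1 where "H1 = H0(0 := int k + 1, 4 := int k - 1)"
  have next_prefix: "step retract_machine \<phi> (cfg 6 T0 H0) = cfg 7 T1 H1"
    by (subst step_next_prefix)
      (use assms in \<open>auto simp: T0_def H0_def T1_def H1_def loop_tapes_def loop_heads_def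
        str_tape_def unary_apply intro!: cfg_cong\<close>)
  have rewind_counter: "steps \<phi> (k + 1) (cfg 7 T1 H1) = cfg 0 T1 (loop_heads (k + 1))"
    by (subst rewind[OF step_rewind_counter step_rewind_counter_end])
      (auto simp: T1_def H1_def H0_def loop_tapes_def loop_heads_def unary_apply intro!: cfg_cong)
  have "steps \<phi> (k + 2) (cfg 6 T0 H0) = steps \<phi> (k + 1) (steps \<phi> 1 (cfg 6 T0 H0))"
    by (simp add: steps_add[symmetric])
  also have "\<dots> = cfg 0 T1 (loop_heads (k + 1))"
    by (simp only: steps_1 next_prefix rewind_counter)
  finally show ?thesis
    by (simp only: T0_def H0_def T1_def)
qed

lemma steps_query_input:
  assumes "k = length a"
  shows "steps \<phi> (2 * k + 4) (cfg 6 (loop_tapes a Q m k) ((loop_heads k)(4 := int k))) =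
    cfg 2 ((loop_tapes a (str_tape (\<phi> a)) m k)(2 := (\<lambda>_. 0)(-1 := 1)))
      ((loop_heads k)(2 := -1, 4 := int k))"
proof -
  define T0 where "T0 = loop_tapes a Q m k"
  define H0 where "H0 = (loop_heads k)(4 := int k)"
  define H1 where "H1 = H0(0 := 0, 2 := -1)"
  define T1 where "T1 = T0(1 := \<lambda>x. if 0 \<le> x \<and> x < int k then T0 0 x else Q x)"
  define H2 where "H2 = H1(0 := int k, 1 := int k)"
  have input_exhausted: "step retract_machine \<phi> (cfg 6 T0 H0) = cfg 8 T0 (H1(0 := int k - 1))"
    by (subst step_input_exhausted)
      (use assms in \<open>auto simp: T0_def H0_def H1_def loop_tapes_def loop_heads_def str_tape_def
        intro!: cfg_cong\<close>)
  have rewind_input: "steps \<phi> (k + 1) (cfg 8 T0 (H1(0 := int k - 1))) = cfg 9 T0 H1"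
    by (subst rewind[OF step_rewind_input step_rewind_input_end])
      (use assms in \<open>auto simp: T0_def H1_def loop_tapes_def str_tape_def intro!: cfg_cong\<close>)
  have copy_input: "steps \<phi> k (cfg 9 T0 H1) = cfg 9 T1 H2"
    by (rule sweep[where g = "\<lambda>s. s" and r = 0, OF step_copy_input])
      (use assms in \<open>auto simp: T0_def T1_def H0_def H1_def H2_def loop_tapes_def loop_heads_def
        str_tape_def\<close>)
  have copy_input_end: "step retract_machine \<phi> (cfg 9 T1 H2) =
      cfg 1 (T1(1 := (T1 1)(int k := 0), 2 := (T1 2)(-1 := 1))) H2"
    by (subst step_copy_input_end)
      (use assms in \<open>auto simp: T0_def T1_def H0_def H1_def H2_def loop_tapes_def loop_heads_def
        str_tape_def\<close>)
  have "read_str ((T1 1)(int k := 0)) = a"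
    using assms by (subst read_str_eqI[of "length a"])
      (auto simp: T1_def T0_def loop_tapes_def str_tape_def intro: nth_equalityI)
  then have query: "step retract_machine \<phi> (cfg 1 (T1(1 := (T1 1)(int k := 0), 2 := (T1 2)(-1 := 1))) H2) =
      cfg 2 ((loop_tapes a (str_tape (\<phi> a)) m k)(2 := (\<lambda>_. 0)(-1 := 1))) ((loop_heads k)(2 := -1, 4 := int k))"
    unfolding step_query
    by (auto simp: T1_def T0_def H2_def H1_def H0_def loop_tapes_def loop_heads_def intro!: cfg_cong)
  have "2 * k + 4 = 1 + (k + 1) + k + 1 + 1"
    by simp
  then have "steps \<phi> (2 * k + 4) (cfg 6 T0 H0) =
      steps \<phi> 1 (steps \<phi> 1 (steps \<phi> k (steps \<phi> (k + 1) (steps \<phi> 1 (cfg 6 T0 H0)))))"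
    by (simp only: steps_add)
  also have "\<dots> = cfg 2 ((loop_tapes a (str_tape (\<phi> a)) m k)(2 := (\<lambda>_. 0)(-1 := 1)))
      ((loop_heads k)(2 := -1, 4 := int k))"
    by (simp only: steps_1 input_exhausted rewind_input copy_input copy_input_end query)
  finally show ?thesis
    by (simp only: T0_def H0_def)
qed

lemma steps_write_output:
  obtains T H where
    "steps \<phi> (m + 2) (cfg 2 ((loop_tapes a (str_tape b) m k)(2 := (\<lambda>_. 0)(-1 := 1)))
       ((loop_heads k)(2 := -1, 4 := int k))) = cfg 11 T H"
    "read_str (T 2) = resize m b"
proof -
  define T0 where "T0 = (loop_tapes a (str_tape b) m k)(2 := (\<lambda>_. 0)(-1 := 1))"
  define H0 where "H0 = (loop_heads k)(4 := int k)"
  define T1 where "T1 = T0(2 := \<lambda>x. if 0 \<le> x \<and> x < int m then (if T0 1 x = 2 then 2 else 1) else T0 2 x)"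
  define H1 where "H1 = H0(1 := int m, 2 := int m, 3 := int m)"
  have dispatch: "step retract_machine \<phi> (cfg 2 T0 (H0(2 := -1))) = cfg 10 T0 H0"
    by (subst step_dispatch_output) (auto simp: T0_def H0_def loop_heads_def intro!: cfg_cong)
  have write_output: "steps \<phi> m (cfg 10 T0 H0) = cfg 10 T1 H1"
    by (rule sweep[where g = "\<lambda>s. if s = 2 then 2 else 1" and r = 1, OF step_write_output])
      (auto simp: T0_def T1_def H0_def H1_def loop_tapes_def loop_heads_def unary_apply)
  have write_output_end: "step retract_machine \<phi> (cfg 10 T1 H1) = cfg 11 T1 H1"
    by (rule step_write_output_end) (simp add: T1_def T0_def H1_def loop_tapes_def unary_apply)
  have "m + 2 = 1 + m + 1"
    by simp
  then have "steps \<phi> (m + 2) (cfg 2 T0 (H0(2 := -1))) =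
      steps \<phi> 1 (steps \<phi> m (steps \<phi> 1 (cfg 2 T0 (H0(2 := -1)))))"
    by (simp only: steps_add)
  also have "\<dots> = cfg 11 T1 H1"
    by (simp only: steps_1 dispatch write_output write_output_end)
  finally have "steps \<phi> (m + 2) (cfg 2 T0 (H0(2 := -1))) = cfg 11 T1 H1" .
  moreover have "read_str (T1 2) = map (\<lambda>j. T1 2 (int j) = 2) [0..<m]"
    by (rule read_str_eqI) (auto simp: T1_def T0_def)
  moreover have "\<dots> = resize m b"
    unfolding resize_def by (rule nth_equalityI) (auto simp: T1_def T0_def loop_tapes_def str_tape_def)
  moreover have "H0(2 := -1) = (loop_heads k)(2 := -1, 4 := int k)"
    by (auto simp: H0_def)
  ultimately show ?thesis
    using that by (simp only: T0_def)
qed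

definition final_time :: "nat \<Rightarrow> nat \<Rightarrow> nat" where
  "final_time k m = (2 * k + 4) + (m + 2)"

lemma steps_final:
  assumes "k = length a"
  obtains T H where
    "steps \<phi> (final_time k m) (cfg 6 (loop_tapes a Q m k) ((loop_heads k)(4 := int k))) = cfg 11 T H"
    "read_str (T 2) = resize m (\<phi> a)"
proof -
  obtain T H where
    "steps \<phi> (m + 2) (cfg 2 ((loop_tapes a (str_tape (\<phi> a)) m k)(2 := (\<lambda>_. 0)(-1 := 1)))
       ((loop_heads k)(2 := -1, 4 := int k))) = cfg 11 T H"
    "read_str (T 2) = resize m (\<phi> a)"
    by (rule steps_write_output)
  then show thesis
    by (intro that[of T H])
      (simp_all only: final_time_def steps_add[of \<phi> "2 * k + 4"] steps_query_input[OF assms])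
qed

definition loop_time :: "strfun \<Rightarrow> nat \<Rightarrow> nat" where
  "loop_time \<phi> k = (\<Sum>j<k. zeros_round_time \<phi> j + (j + 2))"

lemma steps_loop:
  assumes "k \<le> length a"
  shows "\<exists>Q. steps \<phi> (loop_time \<phi> k) (cfg 0 (loop_tapes a (\<lambda>_. 0) 0 0) (loop_heads 0)) =
    cfg 0 (loop_tapes a Q (max_len_zeros \<phi> k) k) (loop_heads k)"
  using assms
proof (induction k)
  case 0
  then show ?case
    by (auto simp: loop_time_def steps_def)
next
  case (Suc k)
  then obtain Q where IH: "steps \<phi> (loop_time \<phi> k) (cfg 0 (loop_tapes a (\<lambda>_. 0) 0 0) (loop_heads 0)) =
      cfg 0 (loop_tapes a Q (max_len_zeros \<phi> k) k) (loop_heads k)"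
    by auto
  have "loop_time \<phi> (Suc k) = loop_time \<phi> k + zeros_round_time \<phi> k + (k + 2)"
    by (simp add: loop_time_def)
  then have "steps \<phi> (loop_time \<phi> (Suc k)) (cfg 0 (loop_tapes a (\<lambda>_. 0) 0 0) (loop_heads 0)) =
      steps \<phi> (k + 2) (steps \<phi> (zeros_round_time \<phi> k)
        (steps \<phi> (loop_time \<phi> k) (cfg 0 (loop_tapes a (\<lambda>_. 0) 0 0) (loop_heads 0))))"
    by (simp only: steps_add)
  also have "\<dots> = cfg 0 (loop_tapes a (str_tape (\<phi> (replicate k False))) (max_len_zeros \<phi> (Suc k)) (k + 1))
      (loop_heads (k + 1))"
    using Suc.prems
    by (simp only: IH steps_zeros_round max_len_zeros.simps steps_next_prefix Suc_le_eq)
  finally show ?case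
    by auto
qed

definition retract_time :: "strfun \<Rightarrow> str \<Rightarrow> nat" where
  "retract_time \<phi> a = loop_time \<phi> (length a) + zeros_round_time \<phi> (length a) +
     final_time (length a) (max_len_zeros \<phi> (Suc (length a)))"

lemma init_config_retract_machine:
  "init_config retract_machine a = cfg 0 (loop_tapes a (\<lambda>_. 0) 0 0) (loop_heads 0)"
  unfolding init_config_def retract_machine_def cfg_def upt_5 loop_tapes_def loop_heads_def
  by (simp add: unary_def str_tape_def fun_eq_iff numeral_eq_Suc)

lemma retract_machine_halts:
  "halts_with retract_machine \<phi> a (retract_time \<phi> a) (retract \<phi> a)"
proof -
  let ?n = "length a"
  obtain Q where "steps \<phi> (loop_time \<phi> ?n) (cfg 0 (loop_tapes a (\<lambda>_. 0) 0 0) (loop_heads 0)) =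
      cfg 0 (loop_tapes a Q (max_len_zeros \<phi> ?n) ?n) (loop_heads ?n)"
    using steps_loop by blast
  then have "steps \<phi> (loop_time \<phi> ?n + zeros_round_time \<phi> ?n) (init_config retract_machine a) =
      cfg 6 (loop_tapes a (str_tape (\<phi> (replicate ?n False))) (max_len_zeros \<phi> (Suc ?n)) ?n)
        ((loop_heads ?n)(4 := int ?n))"
    by (simp add: steps_add steps_zeros_round init_config_retract_machine)
  moreover obtain T H where
    "steps \<phi> (final_time ?n (max_len_zeros \<phi> (Suc ?n)))
       (cfg 6 (loop_tapes a (str_tape (\<phi> (replicate ?n False))) (max_len_zeros \<phi> (Suc ?n)) ?n)
         ((loop_heads ?n)(4 := int ?n))) = cfg 11 T H"
    and "read_str (T 2) = resize (max_len_zeros \<phi> (Suc ?n)) (\<phi> a)"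
    using steps_final by blast
  ultimately show ?thesis
    unfolding halts_with_def run_def retract_time_def retract_def steps_def[symmetric]
    by (simp add: steps_add cfg_def retract_machine_def upt_5)
qed

section \<open>Running time\<close>

lemma length_le_sizefun: "length b \<le> n \<Longrightarrow> length (\<phi> b) \<le> sizefun \<phi> n"
proof -
  assume "length b \<le> n"
  moreover have "finite {a :: str. length a \<le> n}"
    using finite_lists_length_le[of "UNIV :: bool set" n] by simp
  ultimately show ?thesis
    unfolding sizefun_def by (intro Max_ge) auto
qed

lemma max_len_zeros_le_sizefun: "k \<le> Suc n \<Longrightarrow> max_len_zeros \<phi> k \<le> sizefun \<phi> n"
  by (induction k) (auto intro: length_le_sizefun)

lemma second_order_poly_retract_time:
  "second_order_poly (\<lambda>l n. 20 * ((n + 1) * (n + 1 + l n)))"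
proof -
  have n1: "second_order_poly (\<lambda>l n. n + 1)"
    using sop_add[OF sop_var sop_const] .
  have "second_order_poly (\<lambda>l n. n + 1 + l n)"
    using sop_add[OF n1 sop_app[OF sop_var]] .
  then have "second_order_poly (\<lambda>l n. (n + 1) * (n + 1 + l n))"
    using sop_mult[OF n1] by blast
  then show ?thesis
    using sop_mult[OF sop_const] by blast
qed

lemma retract_time_le:
  "retract_time \<phi> a \<le> 20 * ((length a + 1) * (length a + 1 + sizefun \<phi> (length a)))"
proof -
  define n where "n = length a"
  define s where "s = sizefun \<phi> n"
  have round: "zeros_round_time \<phi> j \<le> n + 3 * s + 6" if "j \<le> n" for j
    using that length_le_sizefun[of "replicate j False" n \<phi>]
    by (simp add: zeros_round_time_def s_def)
  have "loop_time \<phi> n \<le> (\<Sum>j<n. 2 * n + 3 * s + 8)"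
    unfolding loop_time_def
  proof (intro sum_mono)
    fix j
    assume "j \<in> {..<n}"
    then show "zeros_round_time \<phi> j + (j + 2) \<le> 2 * n + 3 * s + 8"
      using round[of j] by simp
  qed
  moreover have "zeros_round_time \<phi> n \<le> n + 3 * s + 6"
    using round by simp
  moreover have "final_time n (max_len_zeros \<phi> (Suc n)) \<le> 2 * n + s + 6"
    using max_len_zeros_le_sizefun[of "Suc n" n \<phi>] by (simp add: final_time_def s_def)
  moreover have "n * (2 * n + 3 * s + 8) + (n + 3 * s + 6) + (2 * n + s + 6) \<le> 20 * ((n + 1) * (n + 1 + s))"
    by (simp add: algebra_simps)
  ultimately show ?thesis
    unfolding retract_time_def n_def[symmetric] s_def[symmetric] by simp
qed

lemma poly_time_functional_retract: "poly_time_functional retract"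
  unfolding poly_time_functional_def
  using wf_retract_machine second_order_poly_retract_time retract_machine_halts retract_time_le
  by blast

theorem mainTheorem7:
  shows "\<exists>R :: strfun \<Rightarrow> strfun.
           poly_time_functional R \<and>
           (\<forall>\<phi>. length_monotone (R \<phi>)) \<and>
           (\<forall>\<phi>. length_monotone \<phi> \<longrightarrow> R \<phi> = \<phi>)"
  using poly_time_functional_retract length_monotone_retract retract_eq_if_length_monotone
  by blast

end
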